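(* Let $n\ge 2$ and let $G=(V,E)$ be a $k$-edge-connected graph on $n$ vertices with $k\ge 7\log_2 n$. Then there is a set $S\subseteq V$ with $|S|\ge 2$ such that the induced subgraph $G[S]$ is $k/20$-edge-connected, $1/4$-dense in $G$, and satisfies $\phi(G[S])\ge 1/k$.
   Context: Graphs are finite, undirected, unweighted, loopless, possibly with parallel edges; $k$-edge-connected means every cut $(S,\overline S)$, $\emptyset\ne S\subsetneq V$, has at least $k$ edges. For a graph $H$ and $S\subseteq V(H)$, $\partial_H(S)$ is the number of edges of $H$ leaving $S$, $d_H(S)$ is the sum of $H$-degrees of vertices in $S$, and $\phi(H)=\min_{\emptyset\ne S\subsetneq V(H)}\partial_H(S)/\min\{d_H(S),d_H(V(H)\setminus S)\}$. An induced subgraph $H$ of $G$ is $\lambda$-dense if $d_H(v)\ge\lambda\, d_G(v)$ for every vertex $v$ of $H$. *)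

theory Defs
  imports Complex_Main
begin

text \<open>A finite loopless multigraph is a finite vertex set V together with a symmetric
edge-multiplicity function m (m u v = number of parallel edges between u and v),
vanishing on the diagonal and outside V.\<close>

definition multigraph :: "'a set \<Rightarrow> ('a \<Rightarrow> 'a \<Rightarrow> nat) \<Rightarrow> bool" where
  "multigraph V m \<longleftrightarrow> finite V \<and> (\<forall>u v. m u v = m v u) \<and> (\<forall>v. m v v = 0)
     \<and> (\<forall>u v. m u v \<noteq> 0 \<longrightarrow> u \<in> V \<and> v \<in> V)"

definition deg :: "'a set \<Rightarrow> ('a \<Rightarrow> 'a \<Rightarrow> nat) \<Rightarrow> 'a \<Rightarrow> nat" where
  "deg V m v = (\<Sum>u\<in>V. m v u)"

definition cut :: "'a set \<Rightarrow> ('a \<Rightarrow> 'a \<Rightarrow> nat) \<Rightarrow> 'a set \<Rightarrow> nat" where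
  "cut V m S = (\<Sum>u\<in>S. \<Sum>w\<in>V - S. m u w)"

definition vol :: "'a set \<Rightarrow> ('a \<Rightarrow> 'a \<Rightarrow> nat) \<Rightarrow> 'a set \<Rightarrow> nat" where
  "vol V m S = (\<Sum>v\<in>S. deg V m v)"

definition edge_connected :: "'a set \<Rightarrow> ('a \<Rightarrow> 'a \<Rightarrow> nat) \<Rightarrow> real \<Rightarrow> bool" where
  "edge_connected V m k \<longleftrightarrow> (\<forall>S. S \<noteq> {} \<and> S \<subset> V \<longrightarrow> real (cut V m S) \<ge> k)"

definition conductance :: "'a set \<Rightarrow> ('a \<Rightarrow> 'a \<Rightarrow> nat) \<Rightarrow> real" where
  "conductance V m = Min {real (cut V m S) / min (real (vol V m S)) (real (vol V m (V - S))) | S.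
      S \<noteq> {} \<and> S \<subset> V}"

definition induced :: "('a \<Rightarrow> 'a \<Rightarrow> nat) \<Rightarrow> 'a set \<Rightarrow> ('a \<Rightarrow> 'a \<Rightarrow> nat)" where
  "induced m S = (\<lambda>u v. if u \<in> S \<and> v \<in> S then m u v else 0)"

definition dense_in :: "'a set \<Rightarrow> ('a \<Rightarrow> 'a \<Rightarrow> nat) \<Rightarrow> 'a set \<Rightarrow> real \<Rightarrow> bool" where
  "dense_in V m S lam \<longleftrightarrow> (\<forall>v\<in>S. real (deg S (induced m S) v) \<ge> lam * real (deg V m v))"

end

theory Submission
  imports Defs
begin

text \<open>Choose \<open>S\<close> minimising the ratio of the potential
  \<open>\<partial>(S) - k/10 + (2/k) d(S) log\<^sub>2 |S|\<close> to the volume \<open>d(S)\<close>.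
  Comparing \<open>S\<close> with the two sides \<open>A\<close>, \<open>B\<close> of any split (\<open>|A| \<le> |B|\<close>, so \<open>log |S| \<ge> 1 + log |A|\<close>)
  shows that the split is crossed by at least \<open>k/20 + d(A)/k\<close> edges, which gives edge connectivity
  and conductance at once.  Splitting off a single vertex \<open>v\<close> shows that at least a \<open>(1 - \<rho>)/2\<close>
  fraction of its edges stay inside \<open>S\<close>, where \<open>\<rho>\<close> is the minimal ratio; since \<open>k \<ge> 7 log\<^sub>2 n\<close>, comparing with
  \<open>S = V\<close> gives \<open>\<rho> \<le> 2/7\<close>.  The same bound rules out singletons, whose ratio is at least \<open>9/10\<close>.\<close>

definition edges_between :: "('a \<Rightarrow> 'a \<Rightarrow> nat) \<Rightarrow> 'a set \<Rightarrow> 'a set \<Rightarrow> nat" where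
  "edges_between m A B = (\<Sum>u\<in>A. \<Sum>w\<in>B. m u w)"

lemma edges_between_commute:
  assumes "multigraph V m"
  shows "edges_between m A B = edges_between m B A"
proof -
  have "edges_between m A B = (\<Sum>w\<in>B. \<Sum>u\<in>A. m u w)"
    unfolding edges_between_def by (rule sum.swap)
  also have "\<dots> = edges_between m B A"
    unfolding edges_between_def using assms by (simp add: multigraph_def)
  finally show ?thesis .
qed

lemma edges_between_Un_left:
  "finite A \<Longrightarrow> finite B \<Longrightarrow> A \<inter> B = {} \<Longrightarrow>
    edges_between m (A \<union> B) C = edges_between m A C + edges_between m B C"
  unfolding edges_between_def by (simp add: sum.union_disjoint)

lemma edges_between_Un_right:
  "finite B \<Longrightarrow> finite C \<Longrightarrow> B \<inter> C = {} \<Longrightarrow>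
    edges_between m A (B \<union> C) = edges_between m A B + edges_between m A C"
  unfolding edges_between_def by (simp add: sum.union_disjoint sum.distrib)

lemma cut_eq_edges_between: "cut V m S = edges_between m S (V - S)"
  unfolding cut_def edges_between_def ..

lemma cut_Un:
  assumes "multigraph V m" "A \<inter> B = {}" "A \<union> B \<subseteq> V"
  shows "cut V m A + cut V m B = cut V m (A \<union> B) + 2 * edges_between m A B"
proof -
  define R where "R = V - (A \<union> B)"
  have fin: "finite A" "finite B" "finite R"
    using assms rev_finite_subset unfolding R_def multigraph_def by auto
  have "V - A = B \<union> R" "V - B = A \<union> R"
    using assms(2,3) unfolding R_def by auto
  then have "cut V m A = edges_between m A B + edges_between m A R"
    and "cut V m B = edges_between m B A + edges_between m B R"
    using fin assms(2) unfolding cut_eq_edges_between R_def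
    by (auto intro!: edges_between_Un_right)
  moreover have "cut V m (A \<union> B) = edges_between m A R + edges_between m B R"
    using fin(1,2) assms(2) unfolding cut_eq_edges_between R_def by (rule edges_between_Un_left)
  ultimately show ?thesis
    using edges_between_commute[OF assms(1), of B A] by simp
qed

lemma vol_Un: "finite A \<Longrightarrow> finite B \<Longrightarrow> A \<inter> B = {} \<Longrightarrow> vol V m (A \<union> B) = vol V m A + vol V m B"
  unfolding vol_def by (simp add: sum.union_disjoint)

lemma vol_pos:
  assumes "finite X" "v \<in> X" "0 < deg V m v"
  shows "0 < vol V m X"
proof -
  have "deg V m v \<le> vol V m X"
    unfolding vol_def using assms(1,2) by (intro member_le_sum) auto
  then show ?thesis using assms(3) by linarith
qed

lemma cut_singleton:
  assumes "multigraph V m" "v \<in> V"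
  shows "cut V m {v} = deg V m v"
proof -
  have "deg V m v = m v v + (\<Sum>u\<in>V-{v}. m v u)"
    unfolding deg_def using assms by (simp add: multigraph_def sum.remove)
  then show ?thesis
    using assms unfolding cut_def by (simp add: multigraph_def)
qed

lemma cut_le_vol:
  assumes "S \<subseteq> V" "finite V"
  shows "cut V m S \<le> vol V m S"
  unfolding cut_def vol_def deg_def
  using assms by (intro sum_mono sum_mono2) auto

lemma cut_Diff:
  assumes "multigraph V m" "S \<subseteq> V"
  shows "cut V m (V - S) = cut V m S"
proof -
  have "V - (V - S) = S" using assms(2) by blast
  then show ?thesis
    unfolding cut_eq_edges_between using edges_between_commute[OF assms(1), of S] by simp
qed

lemma deg_ge_if_edge_connected:
  assumes "multigraph V m" "edge_connected V m k" "card V \<ge> 2" "v \<in> V"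
  shows "k \<le> real (deg V m v)"
proof -
  have "V \<noteq> {v}" using assms(3) by auto
  then have "{v} \<subset> V" using assms(4) by blast
  then have "k \<le> real (cut V m {v})"
    using assms(2) unfolding edge_connected_def by blast
  then show ?thesis
    using cut_singleton[OF assms(1,4)] by simp
qed

lemma multigraph_induced:
  assumes "multigraph V m" "S \<subseteq> V"
  shows "multigraph S (induced m S)"
proof -
  have "finite S" using assms rev_finite_subset unfolding multigraph_def by blast
  then show ?thesis using assms(1) unfolding multigraph_def induced_def by auto
qed

lemma deg_induced: "v \<in> S \<Longrightarrow> deg S (induced m S) v = (\<Sum>u\<in>S. m v u)"
  unfolding deg_def induced_def by (intro sum.cong) auto

lemma cut_induced: "T \<subseteq> S \<Longrightarrow> cut S (induced m S) T = edges_between m T (S - T)"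
  unfolding cut_def edges_between_def induced_def by (intro sum.cong) auto

lemma vol_induced_le:
  assumes "T \<subseteq> S" "S \<subseteq> V" "finite V"
  shows "vol S (induced m S) T \<le> vol V m T"
  unfolding vol_def
proof (rule sum_mono)
  fix v assume "v \<in> T"
  then have "deg S (induced m S) v = (\<Sum>u\<in>S. m v u)"
    using assms(1) by (intro deg_induced) blast
  also have "\<dots> \<le> deg V m v"
    unfolding deg_def using assms by (intro sum_mono2) auto
  finally show "deg S (induced m S) v \<le> deg V m v" .
qed

lemma conductance_geI:
  assumes "multigraph V m" "card V \<ge> 2"
    and pos: "\<And>S. S \<noteq> {} \<Longrightarrow> S \<subset> V \<Longrightarrow> 0 < cut V m S"
    and ge: "\<And>S. S \<noteq> {} \<Longrightarrow> S \<subset> V \<Longrightarrow> \<phi> * min (real (vol V m S)) (real (vol V m (V - S))) \<le> real (cut V m S)"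
  shows "\<phi> \<le> conductance V m"
proof -
  have fin: "finite V" using assms(1) by (simp add: multigraph_def)
  define Q where "Q S = real (cut V m S) / min (real (vol V m S)) (real (vol V m (V - S)))" for S
  let ?P = "{S. S \<noteq> {} \<and> S \<subset> V}"
  have "conductance V m = Min {Q S | S. S \<noteq> {} \<and> S \<subset> V}"
    unfolding conductance_def Q_def ..
  also have "{Q S | S. S \<noteq> {} \<and> S \<subset> V} = Q ` ?P"
    by blast
  finally have conductance_eq: "conductance V m = Min (Q ` ?P)" .
  have "finite ?P" using fin by (auto intro: finite_subset[of _ "Pow V"])
  moreover have "?P \<noteq> {}"
  proof -
    obtain x where "x \<in> V" using assms(2) by fastforce
    moreover have "V \<noteq> {x}" using assms(2) by auto
    ultimately show ?thesis by blast
  qed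
  moreover have "\<phi> \<le> Q S" if "S \<in> ?P" for S
  proof -
    have S: "S \<noteq> {}" "S \<subset> V" using that by auto
    have "cut V m S \<le> vol V m S" "cut V m S \<le> vol V m (V - S)"
      using S fin cut_le_vol[of S V m] cut_le_vol[of "V - S" V m] cut_Diff[OF assms(1), of S] by auto
    then have "0 < min (real (vol V m S)) (real (vol V m (V - S)))"
      using pos[OF S] by linarith
    then show ?thesis
      unfolding Q_def using ge[OF S] by (simp add: pos_le_divide_eq)
  qed
  ultimately show ?thesis
    unfolding conductance_eq by (simp add: Min_ge_iff)
qed

definition potential :: "'a set \<Rightarrow> ('a \<Rightarrow> 'a \<Rightarrow> nat) \<Rightarrow> real \<Rightarrow> real \<Rightarrow> 'a set \<Rightarrow> real" where
  "potential V m \<kappa> c X = real (cut V m X) - \<kappa> + c * real (vol V m X) * log 2 (real (card X))"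

text \<open>\<open>S\<close> minimises the ratio of potential to volume among the nonempty vertex sets, and \<open>r\<close> is
  this minimal ratio; the ratio is cleared of denominators so that no positivity of volumes is needed.\<close>

locale potential_minimiser =
  fixes V :: "'a set" and m :: "'a \<Rightarrow> 'a \<Rightarrow> nat" and \<kappa> c r :: real and S :: "'a set"
  assumes multigraph: "multigraph V m"
    and c_nonneg: "0 \<le> c"
    and S_subset: "S \<subseteq> V"
    and S_nonempty: "S \<noteq> {}"
    and potential_S: "potential V m \<kappa> c S = r * real (vol V m S)"
    and potential_ge: "\<And>X. X \<subseteq> V \<Longrightarrow> X \<noteq> {} \<Longrightarrow> r * real (vol V m X) \<le> potential V m \<kappa> c X"
begin

lemma finite_S: "finite S"
  using S_subset multigraph rev_finite_subset unfolding multigraph_def by blast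

lemma log_card_le_S:
  assumes "B \<subseteq> S" "B \<noteq> {}"
  shows "log 2 (real (card B)) \<le> log 2 (real (card S))"
proof -
  have "finite B" using assms(1) finite_S rev_finite_subset by blast
  then have "0 < card B" using assms(2) by (simp add: card_gt_0_iff)
  moreover have "card B \<le> card S" using assms(1) finite_S by (rule card_mono[rotated])
  ultimately show ?thesis by simp
qed

lemma ratio_le_log_card:
  assumes "0 \<le> \<kappa>" "0 < vol V m V"
  shows "r \<le> c * log 2 (real (card V))"
proof -
  have "r * real (vol V m V) \<le> potential V m \<kappa> c V"
    using potential_ge[of V] S_nonempty S_subset by blast
  also have "\<dots> \<le> c * log 2 (real (card V)) * real (vol V m V)"
    unfolding potential_def cut_def using assms(1) by (simp add: mult_ac)
  finally show ?thesis using assms(2) by simp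
qed

lemma cross_edges_ge:
  assumes AB: "A \<inter> B = {}" "A \<union> B = S" "A \<noteq> {}" "B \<noteq> {}" and "card A \<le> card B"
  shows "\<kappa> + c * real (vol V m A) \<le> 2 * real (edges_between m A B)"
proof -
  have fin: "finite A" "finite B" using finite_S AB(2) by auto
  have "cut V m A + cut V m B = cut V m S + 2 * edges_between m A B"
    using cut_Un[OF multigraph AB(1)] AB(2) S_subset by simp
  then have cut: "real (cut V m A) + real (cut V m B) = real (cut V m S) + 2 * real (edges_between m A B)"
    using of_nat_add of_nat_mult by (metis of_nat_numeral)
  have vol: "real (vol V m S) = real (vol V m A) + real (vol V m B)"
    using vol_Un[OF fin AB(1), of V m] AB(2) by simp
  define lA lB lS where "lA = log 2 (real (card A))" and "lB = log 2 (real (card B))"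
    and "lS = log 2 (real (card S))"
  have "1 \<le> card A" using fin(1) AB(3) by (simp add: Suc_le_eq card_gt_0_iff)
  moreover have "card S = card A + card B" using fin AB(1,2) card_Un_disjoint by metis
  ultimately have "log 2 (2 * real (card A)) \<le> lS"
    unfolding lS_def using \<open>card A \<le> card B\<close> by simp
  then have lA: "lA \<le> lS - 1"
    unfolding lA_def using \<open>1 \<le> card A\<close> by (simp add: log_mult)
  have lB: "lB \<le> lS"
    unfolding lB_def lS_def using AB by (intro log_card_le_S) auto
  have "A \<subseteq> V" "B \<subseteq> V" using AB(2) S_subset by auto
  then have "potential V m \<kappa> c S \<le> potential V m \<kappa> c A + potential V m \<kappa> c B"
    using potential_S potential_ge[of A] potential_ge[of B] AB(3,4) vol
    by (simp add: distrib_left)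
  then have "real (cut V m S) + c * real (vol V m S) * lS
      \<le> real (cut V m A) + real (cut V m B) - \<kappa> + c * real (vol V m A) * lA + c * real (vol V m B) * lB"
    unfolding potential_def lA_def lB_def lS_def by simp
  moreover have "c * real (vol V m A) * lA \<le> c * real (vol V m A) * (lS - 1)"
    and "c * real (vol V m B) * lB \<le> c * real (vol V m B) * lS"
    using lA lB c_nonneg by (simp_all add: mult_left_mono)
  moreover have "c * real (vol V m S) * lS
      = c * real (vol V m A) * (lS - 1) + c * real (vol V m B) * lS + c * real (vol V m A)"
    using vol by (simp add: algebra_simps)
  ultimately show ?thesis using cut by linarith
qed

lemma cut_induced_ge:
  assumes "T \<noteq> {}" "T \<subset> S"
  shows "\<kappa> + c * min (real (vol V m T)) (real (vol V m (S - T))) \<le> 2 * real (cut S (induced m S) T)"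
proof -
  have cut: "cut S (induced m S) T = edges_between m T (S - T)"
    using assms(2) by (simp add: cut_induced)
  have "S - T \<noteq> {}" "T \<inter> (S - T) = {}" "T \<union> (S - T) = S" using assms by auto
  show ?thesis
  proof (cases "card T \<le> card (S - T)")
    case True
    then have "\<kappa> + c * real (vol V m T) \<le> 2 * real (edges_between m T (S - T))"
      using assms \<open>S - T \<noteq> {}\<close> by (intro cross_edges_ge) auto
    moreover have "c * min (real (vol V m T)) (real (vol V m (S - T))) \<le> c * real (vol V m T)"
      using c_nonneg by (simp add: mult_left_mono)
    ultimately show ?thesis unfolding cut by linarith
  next
    case False
    then have "\<kappa> + c * real (vol V m (S - T)) \<le> 2 * real (edges_between m (S - T) T)"
      using assms \<open>S - T \<noteq> {}\<close> by (intro cross_edges_ge) auto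
    moreover have "c * min (real (vol V m T)) (real (vol V m (S - T))) \<le> c * real (vol V m (S - T))"
      using c_nonneg by (simp add: mult_left_mono)
    ultimately show ?thesis
      unfolding cut using edges_between_commute[OF multigraph, of "S - T" T] by linarith
  qed
qed

lemma edge_connected_induced:
  assumes "0 \<le> \<kappa>"
  shows "edge_connected S (induced m S) (\<kappa> / 2)"
  unfolding edge_connected_def
proof (intro allI impI)
  fix T assume "T \<noteq> {} \<and> T \<subset> S"
  moreover have "0 \<le> c * min (real (vol V m T)) (real (vol V m (S - T)))"
    using c_nonneg by simp
  ultimately show "\<kappa> / 2 \<le> real (cut S (induced m S) T)"
    using cut_induced_ge[of T] by linarith
qed

lemma conductance_induced_ge:
  assumes "0 < \<kappa>" "2 \<le> card S"
  shows "c / 2 \<le> conductance S (induced m S)"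
proof (rule conductance_geI[OF multigraph_induced[OF multigraph S_subset] assms(2)])
  fix T assume T: "T \<noteq> {}" "T \<subset> S"
  let ?minV = "min (real (vol V m T)) (real (vol V m (S - T)))"
  let ?minS = "min (real (vol S (induced m S) T)) (real (vol S (induced m S) (S - T)))"
  have fin: "finite V" using multigraph by (simp add: multigraph_def)
  have "0 \<le> c * ?minV" using c_nonneg by simp
  then show "0 < cut S (induced m S) T"
    using cut_induced_ge[OF T] assms(1) by linarith
  have "?minS \<le> ?minV"
    using T vol_induced_le[of T S V m] vol_induced_le[of "S - T" S V m] S_subset fin by auto
  then have "c / 2 * ?minS \<le> c / 2 * ?minV"
    using c_nonneg by (simp add: mult_left_mono)
  then show "c / 2 * ?minS \<le> real (cut S (induced m S) T)"
    using cut_induced_ge[OF T] assms(1) by linarith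
qed

lemma deg_induced_ge:
  assumes "v \<in> S" "S \<noteq> {v}"
  shows "(1 - r) * real (deg V m v) \<le> 2 * real (deg S (induced m S) v)"
proof -
  define B where "B = S - {v}"
  have B: "B \<noteq> {}" "B \<subseteq> V" "finite B" "{v} \<inter> B = {}" "{v} \<union> B = S"
    using assms S_subset finite_S unfolding B_def by auto
  have vV: "v \<in> V" using assms(1) S_subset by blast
  have "deg V m v + cut V m B = cut V m S + 2 * edges_between m {v} B"
    using cut_Un[OF multigraph B(4)] B(2,5) vV cut_singleton[OF multigraph vV] by simp
  then have cut: "real (deg V m v) + real (cut V m B) = real (cut V m S) + 2 * real (edges_between m {v} B)"
    using of_nat_add of_nat_mult by (metis of_nat_numeral)
  have "edges_between m {v} B = deg S (induced m S) v"
  proof -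
    have "deg S (induced m S) v = m v v + (\<Sum>u\<in>B. m v u)"
      unfolding deg_induced[OF assms(1)] B_def using finite_S assms(1) by (simp add: sum.remove)
    then show ?thesis
      using multigraph unfolding edges_between_def multigraph_def by simp
  qed
  moreover have vol: "real (vol V m S) = real (deg V m v) + real (vol V m B)"
    using vol_Un[OF _ B(3,4), of V m] B(5) by (simp add: vol_def)
  moreover have "r * real (vol V m B) \<le> potential V m \<kappa> c B"
    using potential_ge B by simp
  moreover have "real (vol V m B) * log 2 (real (card B)) \<le> real (vol V m S) * log 2 (real (card S))"
  proof (rule mult_mono)
    show "log 2 (real (card B)) \<le> log 2 (real (card S))"
      using B by (intro log_card_le_S) auto
    show "0 \<le> log 2 (real (card B))"
      using B(1,3) by (simp add: Suc_le_eq card_gt_0_iff)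
  qed (use vol in auto)
  then have "c * (real (vol V m B) * log 2 (real (card B))) \<le> c * (real (vol V m S) * log 2 (real (card S)))"
    using c_nonneg by (rule mult_left_mono)
  ultimately show ?thesis
    using cut potential_S unfolding potential_def by (simp add: algebra_simps)
qed

lemma dense_in_induced:
  assumes "2 \<le> card S" "l \<le> (1 - r) / 2"
  shows "dense_in V m S l"
  unfolding dense_in_def
proof
  fix v assume v: "v \<in> S"
  have "S \<noteq> {v}" using assms(1) by auto
  with v have "(1 - r) * real (deg V m v) \<le> 2 * real (deg S (induced m S) v)"
    by (rule deg_induced_ge)
  then have "(1 - r) / 2 * real (deg V m v) \<le> real (deg S (induced m S) v)"
    by simp
  moreover have "l * real (deg V m v) \<le> (1 - r) / 2 * real (deg V m v)"
    using assms(2) by (intro mult_right_mono) auto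
  ultimately show "l * real (deg V m v) \<le> real (deg S (induced m S) v)" by linarith
qed

lemma two_le_card_S:
  assumes "\<And>v. v \<in> V \<Longrightarrow> \<kappa> < (1 - r) * real (deg V m v)"
  shows "2 \<le> card S"
proof (rule ccontr)
  assume "\<not> 2 \<le> card S"
  moreover have "card S \<noteq> 0" using finite_S S_nonempty by simp
  ultimately obtain v where S: "S = {v}"
    by (metis One_nat_def card_1_singletonE less_2_cases not_le)
  then have vV: "v \<in> V" using S_subset by blast
  have "potential V m \<kappa> c S = real (deg V m v) - \<kappa>"
    unfolding potential_def S using cut_singleton[OF multigraph vV] by (simp add: vol_def)
  moreover have "vol V m S = deg V m v" unfolding S vol_def by simp
  ultimately show False using potential_S assms[OF vV] by (simp add: algebra_simps)
qed

end

lemma potential_minimiser_exists: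
  assumes "multigraph V m" "V \<noteq> {}" "0 \<le> c" and deg_pos: "\<And>v. v \<in> V \<Longrightarrow> 0 < deg V m v"
  shows "\<exists>r S. potential_minimiser V m \<kappa> c r S"
proof -
  define F where "F = {X. X \<subseteq> V \<and> X \<noteq> {}}"
  define \<rho> where "\<rho> X = potential V m \<kappa> c X / real (vol V m X)" for X
  have fin: "finite V" using assms(1) by (simp add: multigraph_def)
  have "finite F" unfolding F_def using fin by simp
  moreover have "F \<noteq> {}" unfolding F_def using assms(2) by blast
  ultimately obtain S where S: "S \<in> F" and S_min: "\<And>X. X \<in> F \<Longrightarrow> \<rho> S \<le> \<rho> X"
    using ex_is_arg_min_if_finite[of F \<rho>] unfolding is_arg_min_def by (meson not_less)
  have vol_F_pos: "0 < real (vol V m X)" if "X \<in> F" for X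
  proof -
    have "X \<subseteq> V" "X \<noteq> {}" using that unfolding F_def by auto
    then obtain x where "x \<in> X" "x \<in> V" by blast
    moreover have "finite X" using \<open>X \<subseteq> V\<close> fin by (rule finite_subset)
    ultimately show ?thesis
      using vol_pos deg_pos by (metis of_nat_0_less_iff)
  qed
  have "potential_minimiser V m \<kappa> c (\<rho> S) S"
  proof
    show "S \<subseteq> V" "S \<noteq> {}" using S unfolding F_def by auto
    show "potential V m \<kappa> c S = \<rho> S * real (vol V m S)"
      using vol_F_pos[OF S] unfolding \<rho>_def by simp
    show "\<rho> S * real (vol V m X) \<le> potential V m \<kappa> c X" if "X \<subseteq> V" "X \<noteq> {}" for X
    proof -
      have "X \<in> F" using that unfolding F_def by blast
      then show ?thesis
        using S_min vol_F_pos unfolding \<rho>_def by (simp add: pos_le_divide_eq)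
    qed
  qed (use assms in auto)
  then show ?thesis by blast
qed

theorem mainTheorem9:
  fixes V :: "'a set" and m :: "'a \<Rightarrow> 'a \<Rightarrow> nat" and k :: nat
  assumes "multigraph V m"
    and "card V \<ge> 2"
    and "edge_connected V m (real k)"
    and "real k \<ge> 7 * log 2 (real (card V))"
  shows "\<exists>S\<subseteq>V. card S \<ge> 2
           \<and> edge_connected S (induced m S) (real k / 20)
           \<and> dense_in V m S (1/4)
           \<and> conductance S (induced m S) \<ge> 1 / real k"
proof -
  have "1 \<le> log 2 (real (card V))" using assms(2) by simp
  then have k_pos: "0 < real k" using assms(4) by linarith
  have deg_ge: "real k \<le> real (deg V m v)" if "v \<in> V" for v
    using deg_ge_if_edge_connected[OF assms(1,3,2) that] .
  have "V \<noteq> {}" using assms(2) by auto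
  moreover have deg_pos: "0 < deg V m v" if "v \<in> V" for v
    using deg_ge[OF that] k_pos by linarith
  ultimately obtain r S where "potential_minimiser V m (real k / 10) (2 / real k) r S"
    using potential_minimiser_exists[OF assms(1), of "2 / real k" "real k / 10"] by auto
  then interpret potential_minimiser V m "real k / 10" "2 / real k" r S .
  obtain v where "v \<in> V" using \<open>V \<noteq> {}\<close> by blast
  moreover have "finite V" using assms(1) by (simp add: multigraph_def)
  ultimately have "0 < vol V m V"
    using vol_pos deg_pos by metis
  then have "r \<le> 2 / real k * log 2 (real (card V))"
    by (intro ratio_le_log_card) simp
  also have "\<dots> \<le> 2 / 7"
    using assms(4) k_pos by (simp add: field_simps)
  finally have r_le: "r \<le> 2 / 7" .
  have "real k / 10 < (1 - r) * real (deg V m v)" if "v \<in> V" for v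
  proof -
    have "5 / 7 * real k \<le> (1 - r) * real (deg V m v)"
      using r_le deg_ge[OF that] k_pos by (intro mult_mono) auto
    then show ?thesis using k_pos by linarith
  qed
  then have card_S: "2 \<le> card S" by (rule two_le_card_S)
  show ?thesis
    using S_subset card_S edge_connected_induced dense_in_induced[OF card_S, of "1/4"]
      conductance_induced_ge[OF _ card_S] r_le k_pos by auto
qed

end
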